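(* Let $(\chi,u)$ be a rooted chirotope with ground set $X\cup\{u\}$, and let $\widetilde\chi$ be the function on ordered triples of distinct elements of $X\cup\{v\}$ ($v$ a new element) defined by $\widetilde\chi(x,y,z)=\chi(x,y,z)$ for $x,y,z\in X$ and $\widetilde\chi(x,y,v)=-\chi(x,y,u)$ for distinct $x,y\in X$ (extended to all orderings by the alternating symmetry). Then $\widetilde\chi$ is a chirotope. Moreover, if $\chi$ is realizable, then $\widetilde\chi$ is realizable as well.
   Context: For a finite set $E$, a sign function on $E$ is a map $\chi$ from ordered triples of distinct elements of $E$ to $\{-1,1\}$ with $\chi(x,y,z)=\chi(y,z,x)=\chi(z,x,y)=-\chi(z,y,x)=-\chi(y,x,z)=-\chi(x,z,y)$. A chirotope is a sign function that moreover satisfies: (interiority) for distinct $t,x,y,z$, if $\chi(t,y,z)=\chi(x,t,z)=\chi(x,y,t)=1$ then $\chi(x,y,z)=1$; (transitivity) for distinct $s,t,x,y,z$, if $\chi(t,s,x)=\chi(t,s,y)=\chi(t,s,z)=\chi(x,y,t)=\chi(y,z,t)=1$ then $\chi(x,z,t)=1$. It is realizable if there are points in $\mathbb R^2$, no three collinear, indexed by $E$, with $\chi(x,y,z)=1$ iff the corresponding points are in counterclockwise order. An element $u$ is extreme if there is $y\ne u$ with $\chi(u,y,z)$ constant over $z\in E\setminus\{u,y\}$; a rooted chirotope is a pair $(\chi,u)$ with $u$ extreme. The rooted pair $(\widetilde\chi,v)$ is called the twist of $(\chi,u)$. *)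

theory Defs
  imports Main "HOL-Analysis.Analysis"
begin

type_synonym 'a signfun = "'a \<Rightarrow> 'a \<Rightarrow> 'a \<Rightarrow> int"

definition sign_function :: "'a signfun \<Rightarrow> 'a set \<Rightarrow> bool" where
  "sign_function chi E \<longleftrightarrow> finite E \<and>
     (\<forall>x\<in>E. \<forall>y\<in>E. \<forall>z\<in>E. distinct [x,y,z] \<longrightarrow>
        chi x y z \<in> {-1, 1} \<and>
        chi x y z = chi y z x \<and> chi x y z = chi z x y \<and>
        chi x y z = - chi z y x \<and> chi x y z = - chi y x z \<and> chi x y z = - chi x z y)"

definition chirotope :: "'a signfun \<Rightarrow> 'a set \<Rightarrow> bool" where
  "chirotope chi E \<longleftrightarrow> sign_function chi E \<and>
     (\<forall>t\<in>E. \<forall>x\<in>E. \<forall>y\<in>E. \<forall>z\<in>E. distinct [t,x,y,z] \<longrightarrow>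
        chi t y z = 1 \<longrightarrow> chi x t z = 1 \<longrightarrow> chi x y t = 1 \<longrightarrow> chi x y z = 1) \<and>
     (\<forall>s\<in>E. \<forall>t\<in>E. \<forall>x\<in>E. \<forall>y\<in>E. \<forall>z\<in>E. distinct [s,t,x,y,z] \<longrightarrow>
        chi t s x = 1 \<longrightarrow> chi t s y = 1 \<longrightarrow> chi t s z = 1 \<longrightarrow>
        chi x y t = 1 \<longrightarrow> chi y z t = 1 \<longrightarrow> chi x z t = 1)"

definition orient :: "real \<times> real \<Rightarrow> real \<times> real \<Rightarrow> real \<times> real \<Rightarrow> real" where
  "orient p q r = (fst q - fst p) * (snd r - snd p) - (snd q - snd p) * (fst r - fst p)"

definition realizable :: "'a signfun \<Rightarrow> 'a set \<Rightarrow> bool" where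
  "realizable chi E \<longleftrightarrow> (\<exists>P :: 'a \<Rightarrow> real \<times> real.
     (\<forall>x\<in>E. \<forall>y\<in>E. \<forall>z\<in>E. distinct [x,y,z] \<longrightarrow>
        orient (P x) (P y) (P z) \<noteq> 0 \<and>
        (chi x y z = 1 \<longleftrightarrow> orient (P x) (P y) (P z) > 0)))"

definition extreme :: "'a signfun \<Rightarrow> 'a set \<Rightarrow> 'a \<Rightarrow> bool" where
  "extreme chi E u \<longleftrightarrow> u \<in> E \<and> (\<exists>y\<in>E. y \<noteq> u \<and>
     (\<forall>z\<in>E - {u, y}. \<forall>z'\<in>E - {u, y}. chi u y z = chi u y z'))"

definition rooted_chirotope :: "'a signfun \<Rightarrow> 'a set \<Rightarrow> 'a \<Rightarrow> bool" where
  "rooted_chirotope chi E u \<longleftrightarrow> chirotope chi E \<and> extreme chi E u"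

definition twist :: "'a signfun \<Rightarrow> 'a \<Rightarrow> 'a \<Rightarrow> 'a signfun" where
  "twist chi u v x y z =
     (if x = v then - chi y z u
      else if y = v then - chi z x u
      else if z = v then - chi x y u
      else chi x y z)"

end

theory Submission
  imports Defs
begin

(* The twist is, up to renaming u to v, the reorientation of chi at u: the signs of exactly the
   triples through u are reversed.  Reorientation keeps the sign-function axioms, and it keeps
   interiority and transitivity as long as the reoriented element lies inside no triangle of
   other elements, which is what extremality guarantees.  Behind this is one combinatorial fact
   about chirotopes: a point t inside a triangle abc cannot see a, b and c on one side of a line
   through t.
   For realizability, a line strictly separating the extreme point from the others is sent to
   infinity by a projective map; this reverses the orientation of exactly the triples through u. *)

definition in_triangle :: "'a signfun \<Rightarrow> 'a \<Rightarrow> 'a \<Rightarrow> 'a \<Rightarrow> 'a \<Rightarrow> bool" where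
  "in_triangle chi t a b c \<longleftrightarrow> chi t a b = chi t b c \<and> chi t b c = chi t c a"

definition reorient :: "'a signfun \<Rightarrow> 'a \<Rightarrow> 'a signfun" where
  "reorient chi e x y z = (if x = e \<or> y = e \<or> z = e then - chi x y z else chi x y z)"

lemma sign_function_alternating:
  assumes "sign_function chi E" "x \<in> E" "y \<in> E" "z \<in> E" "x \<noteq> y" "y \<noteq> z" "x \<noteq> z"
  shows "(chi x y z = 1 \<or> chi x y z = -1) \<and> chi y z x = chi x y z \<and> chi z x y = chi x y z \<and>
    chi z y x = - chi x y z \<and> chi y x z = - chi x y z \<and> chi x z y = - chi x y z"
proof -
  have "chi x y z \<in> {-1, 1} \<and> chi x y z = chi y z x \<and> chi x y z = chi z x y \<and>
      chi x y z = - chi z y x \<and> chi x y z = - chi y x z \<and> chi x y z = - chi x z y"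
    using assms unfolding sign_function_def
    by (metis distinct_length_2_or_more distinct_singleton list.set_intros)
  then show ?thesis by auto
qed

lemma sign_function_reorient:
  assumes "sign_function chi E"
  shows "sign_function (reorient chi e) E"
proof -
  have "reorient chi e x y z \<in> {-1, 1} \<and> reorient chi e x y z = reorient chi e y z x \<and>
      reorient chi e x y z = reorient chi e z x y \<and> reorient chi e x y z = - reorient chi e z y x \<and>
      reorient chi e x y z = - reorient chi e y x z \<and> reorient chi e x y z = - reorient chi e x z y"
    if "x \<in> E" "y \<in> E" "z \<in> E" "distinct [x,y,z]" for x y z
    using sign_function_alternating[OF assms that(1-3)] that(4) unfolding reorient_def by auto
  then show ?thesis using assms unfolding sign_function_def by blast
qed

lemma chirotope_cong:
  assumes "\<And>x y z. x \<in> E \<Longrightarrow> y \<in> E \<Longrightarrow> z \<in> E \<Longrightarrow> distinct [x,y,z] \<Longrightarrow> chi' x y z = chi x y z"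
  shows "chirotope chi' E \<longleftrightarrow> chirotope chi E"
  \<comment> \<open>ordered rewriting with \<open>eq_commute\<close> lets simp discharge the permuted distinctness conditions\<close>
  unfolding chirotope_def sign_function_def by (simp add: assms eq_commute[of "_ :: 'a"])

lemma realizable_cong:
  assumes "\<And>x y z. x \<in> E \<Longrightarrow> y \<in> E \<Longrightarrow> z \<in> E \<Longrightarrow> distinct [x,y,z] \<Longrightarrow> chi' x y z = chi x y z"
  shows "realizable chi' E \<longleftrightarrow> realizable chi E"
  unfolding realizable_def by (simp add: assms)

lemma chirotope_relabel:
  assumes "inj_on f E"
  shows "chirotope (\<lambda>x y z. chi (f x) (f y) (f z)) E \<longleftrightarrow> chirotope chi (f ` E)"
  unfolding chirotope_def sign_function_def
  by (simp add: finite_image_iff[OF assms] inj_on_eq_iff[OF assms])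

lemma extreme_relabel:
  assumes "inj_on f E" "e \<in> E"
  shows "extreme (\<lambda>x y z. chi (f x) (f y) (f z)) E e \<longleftrightarrow> extreme chi (f ` E) (f e)"
proof -
  have "f ` E - {f e, f y} = f ` (E - {e, y})" if "y \<in> E" for y
    using assms that by (auto simp: inj_on_eq_iff)
  then show ?thesis
    using assms unfolding extreme_def by (auto simp: inj_on_eq_iff)
qed

lemma realizable_relabel:
  assumes "realizable chi (f ` E)" "inj_on f E"
  shows "realizable (\<lambda>x y z. chi (f x) (f y) (f z)) E"
proof -
  obtain P where "\<forall>x\<in>f ` E. \<forall>y\<in>f ` E. \<forall>z\<in>f ` E. distinct [x,y,z] \<longrightarrow>
      orient (P x) (P y) (P z) \<noteq> 0 \<and> (chi x y z = 1 \<longleftrightarrow> orient (P x) (P y) (P z) > 0)"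
    using assms(1) unfolding realizable_def by blast
  then show ?thesis
    unfolding realizable_def by (intro exI[of _ "P \<circ> f"]) (simp add: inj_on_eq_iff[OF assms(2)])
qed

context
  fixes chi :: "'a signfun" and E :: "'a set"
  assumes chir: "chirotope chi E"
begin

lemma chirotope_sign_function: "sign_function chi E"
  using chir unfolding chirotope_def by blast

lemmas chirotope_alternating = sign_function_alternating[OF chirotope_sign_function]

lemma chirotope_interiority:
  "\<lbrakk>t \<in> E; x \<in> E; y \<in> E; z \<in> E; distinct [t,x,y,z]; chi t y z = 1; chi x t z = 1; chi x y t = 1\<rbrakk>
   \<Longrightarrow> chi x y z = 1"
  using chir unfolding chirotope_def by blast

lemma chirotope_transitivity:
  "\<lbrakk>s \<in> E; t \<in> E; x \<in> E; y \<in> E; z \<in> E; distinct [s,t,x,y,z];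
    chi t s x = 1; chi t s y = 1; chi t s z = 1; chi x y t = 1; chi y z t = 1\<rbrakk>
   \<Longrightarrow> chi x z t = 1"
  using chir unfolding chirotope_def by blast

lemma chirotope_not_in_triangle_left:
  assumes "t \<in> E" "w \<in> E" "a \<in> E" "b \<in> E" "c \<in> E" "distinct [t,w,a,b,c]"
    and "chi t w a = 1" "chi t w b = 1" "chi t w c = 1"
  shows "\<not> in_triangle chi t a b c"
  using chirotope_transitivity[of w t c a b, simplified]
    chirotope_transitivity[of w t a c b, simplified]
    chirotope_alternating[of t c a] chirotope_alternating[of t a b] chirotope_alternating[of t b c]
    assms(1-5) assms(6)[simplified] assms(7-)
  unfolding in_triangle_def by (smt (z3))

(* Interiority gives chi a b c = 1; then each of the eight sign patterns of w against the
   edges of abc contradicts the previous lemma at w or at a vertex of the triangle. *)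
lemma chirotope_not_in_ccw_triangle_right:
  assumes "t \<in> E" "w \<in> E" "a \<in> E" "b \<in> E" "c \<in> E" "distinct [t,w,a,b,c]"
    and "chi t w a = -1" "chi t w b = -1" "chi t w c = -1"
    and "chi t a b = 1" "chi t b c = 1" "chi t c a = 1"
  shows False
  using chirotope_interiority[of t c a b, simplified]
    chirotope_not_in_triangle_left[of w t c a b, simplified]
    chirotope_not_in_triangle_left[of a b c t w, simplified]
    chirotope_not_in_triangle_left[of b c a t w, simplified]
    chirotope_not_in_triangle_left[of c a b t w, simplified]
    chirotope_alternating[of t w a] chirotope_alternating[of t w b] chirotope_alternating[of t w c]
    chirotope_alternating[of t a b] chirotope_alternating[of t a c] chirotope_alternating[of t b c]
    chirotope_alternating[of w a b] chirotope_alternating[of w a c] chirotope_alternating[of w b c]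
    chirotope_alternating[of a b c]
    assms(1-5) assms(6)[simplified] assms(7-)
  unfolding in_triangle_def by (smt (z3))

lemma chirotope_not_in_triangle:
  assumes "t \<in> E" "w \<in> E" "a \<in> E" "b \<in> E" "c \<in> E" "distinct [t,w,a,b,c]"
    and "chi t w a = chi t w b" "chi t w b = chi t w c"
  shows "\<not> in_triangle chi t a b c"
proof
  assume tri: "in_triangle chi t a b c"
  consider "chi t w a = 1" | "chi t w a = -1" "chi t a b = 1" | "chi t w a = -1" "chi t a b = -1"
    using chirotope_alternating[of t w a] chirotope_alternating[of t a b] assms by auto
  then show False
  proof cases
    case 1
    then show False using chirotope_not_in_triangle_left tri assms by auto
  next
    case 2
    then show False
      using chirotope_not_in_ccw_triangle_right[of t w a b c] tri assms
      unfolding in_triangle_def by auto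
  next
    case 3
    moreover have "chi t a c = - chi t c a" "chi t c b = - chi t b c" "chi t b a = - chi t a b"
      using chirotope_alternating[of t a c] chirotope_alternating[of t b c]
        chirotope_alternating[of t a b] assms by auto
    ultimately show False
      using chirotope_not_in_ccw_triangle_right[of t w a c b] tri assms
      unfolding in_triangle_def by auto
  qed
qed

lemma extreme_not_in_triangle:
  assumes "extreme chi E u" "a \<in> E" "b \<in> E" "c \<in> E" "distinct [u,a,b,c]"
  shows "\<not> in_triangle chi u a b c"
proof -
  obtain w where w: "u \<in> E" "w \<in> E" "w \<noteq> u"
    and const: "\<forall>z\<in>E - {u, w}. \<forall>z'\<in>E - {u, w}. chi u w z = chi u w z'"
    using assms(1) unfolding extreme_def by blast
  show ?thesis
  proof (cases "w \<in> {a, b, c}")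
    case True
    then show ?thesis
      using const[rule_format, of b c] const[rule_format, of c a] const[rule_format, of a b]
        chirotope_alternating[of u a b] chirotope_alternating[of u b c]
        chirotope_alternating[of u c a]
        assms(2-4) assms(5)[simplified] w
      unfolding in_triangle_def by (smt (z3) DiffI empty_iff insert_iff)
  next
    case False
    then show ?thesis
      using chirotope_not_in_triangle[of u w a b c] const assms(2-) w by auto
  qed
qed

(* With the conclusion negated, the hypotheses through e say that e lies inside the triangle of
   the other three points. *)
lemma reorient_interiority:
  assumes free: "\<And>a b c. a \<in> E \<Longrightarrow> b \<in> E \<Longrightarrow> c \<in> E \<Longrightarrow> distinct [e,a,b,c] \<Longrightarrow> \<not> in_triangle chi e a b c"
    and "t \<in> E" "x \<in> E" "y \<in> E" "z \<in> E" "distinct [t,x,y,z]"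
    and "reorient chi e t y z = 1" "reorient chi e x t z = 1" "reorient chi e x y t = 1"
  shows "reorient chi e x y z = 1"
proof -
  note facts =
    chirotope_alternating[of t x y] chirotope_alternating[of t x z] chirotope_alternating[of t y z]
    chirotope_alternating[of x y z]
    assms(2-5) assms(6)[simplified] assms(7-)
  consider "e = t" | "e = x" | "e = y" | "e = z" | "e \<notin> {t,x,y,z}" by auto
  then show ?thesis
  proof cases
    case 1
    then show ?thesis using free[of y z x, simplified] facts
      unfolding reorient_def in_triangle_def by (smt (z3))
  next
    case 2
    then show ?thesis using free[of y z t, simplified] facts
      unfolding reorient_def in_triangle_def by (smt (z3))
  next
    case 3
    then show ?thesis using free[of z x t, simplified] facts
      unfolding reorient_def in_triangle_def by (smt (z3))
  next
    case 4
    then show ?thesis using free[of x y t, simplified] facts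
      unfolding reorient_def in_triangle_def by (smt (z3))
  next
    case 5
    then show ?thesis
      using chirotope_interiority[of t x y z] assms(2-) unfolding reorient_def by auto
  qed
qed

(* With the conclusion negated, some point lies inside a triangle that another point sees from
   one side: t inside xyz seen from e if e = s; e inside xyz seen from s if e = t; otherwise t
   inside the triangle formed by s, e and one of x, y, z. *)
lemma reorient_transitivity:
  assumes "s \<in> E" "t \<in> E" "x \<in> E" "y \<in> E" "z \<in> E" "distinct [s,t,x,y,z]"
    and "reorient chi e t s x = 1" "reorient chi e t s y = 1" "reorient chi e t s z = 1"
    and "reorient chi e x y t = 1" "reorient chi e y z t = 1"
  shows "reorient chi e x z t = 1"
proof -
  note facts =
    chirotope_alternating[of s t x] chirotope_alternating[of s t y] chirotope_alternating[of s t z]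
    chirotope_alternating[of s x y] chirotope_alternating[of s x z] chirotope_alternating[of s y z]
    chirotope_alternating[of t x y] chirotope_alternating[of t x z] chirotope_alternating[of t y z]
    chirotope_alternating[of x y z]
    assms(1-5) assms(6)[simplified] assms(7-)
  consider "e = s" | "e = t" | "e = x" | "e = y" | "e = z" | "e \<notin> {s,t,x,y,z}" by auto
  then show ?thesis
  proof cases
    case 1
    then show ?thesis using chirotope_not_in_triangle[of t e x y z, simplified] facts
      unfolding reorient_def in_triangle_def by (smt (z3))
  next
    case 2
    then show ?thesis using chirotope_not_in_triangle[of e s x y z, simplified] facts
      unfolding reorient_def in_triangle_def by (smt (z3))
  next
    case 3
    then show ?thesis using chirotope_not_in_triangle[of t z s y e, simplified] facts
      unfolding reorient_def in_triangle_def by (smt (z3))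
  next
    case 4
    then show ?thesis using chirotope_not_in_triangle[of t x s z e, simplified] facts
      unfolding reorient_def in_triangle_def by (smt (z3))
  next
    case 5
    then show ?thesis using chirotope_not_in_triangle[of t y s x e, simplified] facts
      unfolding reorient_def in_triangle_def by (smt (z3))
  next
    case 6
    then show ?thesis
      using chirotope_transitivity[of s t x y z] assms unfolding reorient_def by auto
  qed
qed

lemma chirotope_reorient:
  assumes "\<And>a b c. a \<in> E \<Longrightarrow> b \<in> E \<Longrightarrow> c \<in> E \<Longrightarrow> distinct [e,a,b,c] \<Longrightarrow> \<not> in_triangle chi e a b c"
  shows "chirotope (reorient chi e) E"
  unfolding chirotope_def
  using sign_function_reorient[OF chirotope_sign_function] reorient_interiority[OF assms]
    reorient_transitivity
  by blast

end

(* The projective map sending the line l = 0 to infinity and p0 to the origin. *)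
definition perspective :: "(real \<times> real \<Rightarrow> real) \<Rightarrow> real \<times> real \<Rightarrow> real \<times> real \<Rightarrow> real \<times> real" where
  "perspective l p0 p = ((fst p - fst p0) / l p, (snd p - snd p0) / l p)"

lemma orient_perspective:
  assumes l: "\<And>p. l p = a * fst p + b * snd p + g"
    and "l p \<noteq> 0" "l q \<noteq> 0" "l r \<noteq> 0"
  shows "orient (perspective l p0 p) (perspective l p0 q) (perspective l p0 r) =
    l p0 * orient p q r / (l p * l q * l r)"
  using assms(2-) unfolding perspective_def orient_def l by (simp add: divide_simps) algebra

lemma separating_line:
  assumes "finite S" "p \<noteq> q" "\<forall>z\<in>S. 0 < c * orient p q z"
  shows "\<exists>a b g. a * fst p + b * snd p + g < 0 \<and> (\<forall>z\<in>insert q S. 0 < a * fst z + b * snd z + g)"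
proof -
  define d1 d2 where "d1 = fst q - fst p" and "d2 = snd q - snd p"
  \<comment> \<open>tilt the line pq by a small multiple of the perpendicular bisector functional h\<close>
  define h where "h z = d1 * (fst z - fst p) + d2 * (snd z - snd p) - (d1\<^sup>2 + d2\<^sup>2) / 2" for z
  have "d1 \<noteq> 0 \<or> d2 \<noteq> 0"
    using assms(2) unfolding d1_def d2_def by (auto simp: prod_eq_iff)
  then have D: "d1\<^sup>2 + d2\<^sup>2 > 0" by (simp add: sum_power2_gt_zero_iff)
  have "\<forall>\<^sub>F \<epsilon> in at_right 0. \<forall>z\<in>S. 0 < c * orient p q z + \<epsilon> * h z"
  proof (intro eventually_ball_finite[OF assms(1)] ballI)
    fix z assume "z \<in> S"
    have "((\<lambda>\<epsilon>. c * orient p q z + \<epsilon> * h z) \<longlongrightarrow> c * orient p q z + 0 * h z) (at_right 0)"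
      by (intro tendsto_intros)
    then show "\<forall>\<^sub>F \<epsilon> in at_right 0. 0 < c * orient p q z + \<epsilon> * h z"
      using assms(3) \<open>z \<in> S\<close> by (simp add: order_tendstoD(1))
  qed
  then obtain \<epsilon> :: real where \<epsilon>: "0 < \<epsilon>" "\<forall>z\<in>S. 0 < c * orient p q z + \<epsilon> * h z"
    using eventually_happens'[OF trivial_limit_at_right_real
        eventually_conj[OF eventually_at_right_less]]
    by blast
  define a b g where "a = \<epsilon> * d1 - c * d2" and "b = \<epsilon> * d2 + c * d1"
    and "g = c * (d2 * fst p - d1 * snd p) - \<epsilon> * (d1 * fst p + d2 * snd p + (d1\<^sup>2 + d2\<^sup>2) / 2)"
  have line: "a * fst z + b * snd z + g = c * orient p q z + \<epsilon> * h z" for z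
    unfolding a_def b_def g_def h_def orient_def d1_def d2_def by (simp add: algebra_simps)
  have "h p < 0" "h q > 0"
    using D unfolding h_def d1_def d2_def by (simp_all add: power2_eq_square field_simps)
  then show ?thesis
    using \<epsilon> by (intro exI[of _ a] exI[of _ b] exI[of _ g]) (simp add: line orient_def mult_pos_neg)
qed

lemma extreme_strictly_separable:
  assumes sf: "sign_function chi E" and ext: "extreme chi E e" and card: "card E \<ge> 3"
    and P: "\<And>x y z. x \<in> E \<Longrightarrow> y \<in> E \<Longrightarrow> z \<in> E \<Longrightarrow> distinct [x,y,z] \<Longrightarrow>
      orient (P x) (P y) (P z) \<noteq> 0 \<and> (chi x y z = 1 \<longleftrightarrow> orient (P x) (P y) (P z) > 0)"
  shows "\<exists>a b g. a * fst (P e) + b * snd (P e) + g < 0 \<and>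
    (\<forall>z\<in>E - {e}. 0 < a * fst (P z) + b * snd (P z) + g)"
proof -
  obtain w where w: "e \<in> E" "w \<in> E" "w \<noteq> e"
    and const: "\<forall>z\<in>E - {e, w}. \<forall>z'\<in>E - {e, w}. chi e w z = chi e w z'"
    using ext unfolding extreme_def by blast
  have fin: "finite E" using sf unfolding sign_function_def by blast
  have "card (E - {e, w}) > 0"
    using card w by (simp add: card_Diff_subset)
  then obtain z0 where z0: "z0 \<in> E - {e, w}"
    by (metis all_not_in_conv card.empty less_irrefl)
  define c where "c = real_of_int (chi e w z0)"
  have side: "0 < c * orient (P e) (P w) (P z)" if "z \<in> E - {e, w}" for z
  proof -
    have "chi e w z = chi e w z0" using const that z0 by blast
    moreover have "chi e w z = 1 \<or> chi e w z = -1"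
      using sign_function_alternating[OF sf, of e w z] that w by auto
    moreover have "orient (P e) (P w) (P z) \<noteq> 0 \<and> (chi e w z = 1 \<longleftrightarrow> orient (P e) (P w) (P z) > 0)"
      using P[of e w z] that w by auto
    ultimately show ?thesis
      unfolding c_def by (auto simp: zero_less_mult_iff)
  qed
  have "P e \<noteq> P w"
    using side[OF z0] by (auto simp: orient_def)
  then obtain a b g where "a * fst (P e) + b * snd (P e) + g < 0"
    and "\<forall>z\<in>insert (P w) (P ` (E - {e, w})). 0 < a * fst z + b * snd z + g"
    using separating_line[of "P ` (E - {e, w})" "P e" "P w" c] fin side by blast
  then show ?thesis by blast
qed

lemma realizable_reorient_perspective:
  assumes sf: "sign_function chi E"
    and P: "\<And>x y z. x \<in> E \<Longrightarrow> y \<in> E \<Longrightarrow> z \<in> E \<Longrightarrow> distinct [x,y,z] \<Longrightarrow>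
      orient (P x) (P y) (P z) \<noteq> 0 \<and> (chi x y z = 1 \<longleftrightarrow> orient (P x) (P y) (P z) > 0)"
    and l: "\<And>p. l p = a * fst p + b * snd p + g"
    and l_pos: "\<And>z. z \<in> E \<Longrightarrow> 0 < l (P z) \<longleftrightarrow> z \<noteq> e" "\<And>z. z \<in> E \<Longrightarrow> l (P z) \<noteq> 0"
    and "0 < l p0"
  shows "realizable (reorient chi e) E"
  unfolding realizable_def
proof (intro exI[of _ "\<lambda>z. perspective l p0 (P z)"] ballI impI)
  fix x y z assume xyz: "x \<in> E" "y \<in> E" "z \<in> E" "distinct [x,y,z]"
  let ?L = "l (P x) * l (P y) * l (P z)" and ?o = "orient (P x) (P y) (P z)"
    and ?o' = "orient (perspective l p0 (P x)) (perspective l p0 (P y)) (perspective l p0 (P z))"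
  have quotient_sign: "k * p / q \<noteq> 0 \<and> (0 < k * p / q \<longleftrightarrow> (0 < p \<longleftrightarrow> 0 < q))"
    if "0 < k" "p \<noteq> 0" "q \<noteq> 0" for k p q :: real
    using that by (auto simp: zero_less_divide_iff zero_less_mult_iff mult_less_0_iff)
  have "?o' = l p0 * ?o / ?L"
    using l_pos(2) xyz by (intro orient_perspective[OF l]) auto
  moreover have "?L \<noteq> 0" "?o \<noteq> 0" using l_pos(2) P xyz by auto
  ultimately have sign: "?o' \<noteq> 0" "0 < ?o' \<longleftrightarrow> (0 < ?o \<longleftrightarrow> 0 < ?L)"
    using quotient_sign \<open>0 < l p0\<close> by simp_all
  have "0 < ?L \<longleftrightarrow> \<not> (x = e \<or> y = e \<or> z = e)"
    using l_pos[OF xyz(1)] l_pos[OF xyz(2)] l_pos[OF xyz(3)] xyz(4)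
    by (auto simp: zero_less_mult_iff mult_less_0_iff)
  moreover have "chi x y z = 1 \<or> chi x y z = -1"
    using sign_function_alternating[OF sf xyz(1-3)] xyz(4) by auto
  ultimately show "?o' \<noteq> 0 \<and> (reorient chi e x y z = 1 \<longleftrightarrow> ?o' > 0)"
    using P[OF xyz] sign unfolding reorient_def by auto
qed

lemma realizable_reorient:
  assumes sf: "sign_function chi E" and "realizable chi E" and ext: "extreme chi E e"
  shows "realizable (reorient chi e) E"
proof -
  obtain P where P: "\<And>x y z. x \<in> E \<Longrightarrow> y \<in> E \<Longrightarrow> z \<in> E \<Longrightarrow> distinct [x,y,z] \<Longrightarrow>
      orient (P x) (P y) (P z) \<noteq> 0 \<and> (chi x y z = 1 \<longleftrightarrow> orient (P x) (P y) (P z) > 0)"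
    using assms(2) unfolding realizable_def by blast
  show ?thesis
  proof (cases "card E \<ge> 3")
    case False
    have "\<not> distinct [x,y,z]" if "x \<in> E" "y \<in> E" "z \<in> E" for x y z
    proof
      assume "distinct [x,y,z]"
      then have "card {x,y,z} = 3" by simp
      moreover have "card {x,y,z} \<le> card E"
        using that sf unfolding sign_function_def by (intro card_mono) auto
      ultimately show False using False by simp
    qed
    then show ?thesis unfolding realizable_def by blast
  next
    case True
    then obtain a b g where below: "a * fst (P e) + b * snd (P e) + g < 0"
      and above: "\<forall>z\<in>E - {e}. 0 < a * fst (P z) + b * snd (P z) + g"
      using extreme_strictly_separable[OF sf ext _ P] by blast
    define l where "l p = a * fst p + b * snd p + g" for p
    have l_pos: "0 < l (P z) \<longleftrightarrow> z \<noteq> e" "l (P z) \<noteq> 0" if "z \<in> E" for z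
      using below above that unfolding l_def by force+
    obtain w where "w \<in> E" "w \<noteq> e"
      using ext unfolding extreme_def by blast
    then show ?thesis
      using realizable_reorient_perspective[OF sf P l_def l_pos, of "P w"] l_pos by blast
  qed
qed

lemma twist_eq_reorient:
  assumes "sign_function chi (insert u X)" "u \<notin> X" "v \<notin> X"
    and "x \<in> insert v X" "y \<in> insert v X" "z \<in> insert v X" "distinct [x,y,z]"
  shows "twist chi u v x y z =
    reorient (\<lambda>x y z. chi ((id(v := u)) x) ((id(v := u)) y) ((id(v := u)) z)) v x y z"
  using assms sign_function_alternating[OF assms(1), of u y z]
    sign_function_alternating[OF assms(1), of x u z]
  unfolding twist_def reorient_def by auto

theorem proposition2p8:
  fixes chi :: "'a \<Rightarrow> 'a \<Rightarrow> 'a \<Rightarrow> int" and X :: "'a set" and u v :: 'a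
  assumes "u \<notin> X" and "v \<notin> X"
    and "rooted_chirotope chi (insert u X) u"
  shows "chirotope (twist chi u v) (insert v X) \<and>
         (realizable chi (insert u X) \<longrightarrow> realizable (twist chi u v) (insert v X))"
proof -
  define f where "f = id(v := u)"
  define rho where "rho = (\<lambda>x y z. chi (f x) (f y) (f z))"
  have chi: "chirotope chi (insert u X)" and ext: "extreme chi (insert u X) u"
    using assms(3) unfolding rooted_chirotope_def by auto
  have inj: "inj_on f (insert v X)" and img: "f ` insert v X = insert u X" and "f v = u"
    using assms(1,2) unfolding f_def by (auto simp: inj_on_def)
  have rho: "chirotope rho (insert v X)" "extreme rho (insert v X) v"
    using chi ext chirotope_relabel[OF inj] extreme_relabel[OF inj] img \<open>f v = u\<close>
    unfolding rho_def by auto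
  have twist: "twist chi u v x y z = reorient rho v x y z"
    if "x \<in> insert v X" "y \<in> insert v X" "z \<in> insert v X" "distinct [x,y,z]" for x y z
    using twist_eq_reorient[OF chirotope_sign_function[OF chi] assms(1,2) that]
    unfolding rho_def f_def .
  have "chirotope (twist chi u v) (insert v X) \<longleftrightarrow> chirotope (reorient rho v) (insert v X)"
    "realizable (twist chi u v) (insert v X) \<longleftrightarrow> realizable (reorient rho v) (insert v X)"
    by (intro chirotope_cong realizable_cong twist; assumption)+
  moreover have "chirotope (reorient rho v) (insert v X)"
    using chirotope_reorient[OF rho(1) extreme_not_in_triangle[OF rho]] .
  moreover have "realizable (reorient rho v) (insert v X)" if "realizable chi (insert u X)"
    using realizable_reorient[OF chirotope_sign_function[OF rho(1)] _ rho(2)]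
      realizable_relabel[OF _ inj] that img
    unfolding rho_def by simp
  ultimately show ?thesis by blast
qed

end
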